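(* Let $a,b\in\mathbb{Z}^+$ with $a$ odd. For every $n\in\mathbb{Z}^+$, $$t(a,3a,4b;4n+6a)=2t(a,12a,b;n),\qquad t(a,3a,4b;4n+3a)=2t(3a,4a,b;n).$$ Moreover, for all complex $q$ with $|q|<1$, $$\sum_{n=0}^{\infty}t(a,3a,4b;4n)q^n=8\varphi(q^{6a})\psi(q^a)\psi(q^b),\qquad \sum_{n=0}^{\infty}t(a,3a,4b;4n+a)q^n=8\varphi(q^{2a})\psi(q^{3a})\psi(q^b).$$
   Context: $\mathbb{Z}^+$ is the set of positive integers. For $a,b,c\in\mathbb{Z}^+$ and nonnegative integer $n$, $t(a,b,c;n)$ denotes the number of triples $(x,y,z)\in\mathbb{Z}^3$ with $n=a\frac{x(x+1)}2+b\frac{y(y+1)}2+c\frac{z(z+1)}2$. Ramanujan's theta functions are $\varphi(q)=\sum_{n=-\infty}^{\infty}q^{n^2}$ and $\psi(q)=\sum_{n=0}^{\infty}q^{n(n+1)/2}$ for $|q|<1$. *)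

theory Defs
  imports "HOL-Analysis.Analysis"
begin

definition tri :: "int \<Rightarrow> int" where
  "tri x = x * (x + 1) div 2"

definition tcount :: "nat \<Rightarrow> nat \<Rightarrow> nat \<Rightarrow> nat \<Rightarrow> nat" where
  "tcount a b c n = card {(x::int, y::int, z::int).
      int n = int a * tri x + int b * tri y + int c * tri z}"

definition rphi :: "complex \<Rightarrow> complex" where
  "rphi q = (\<Sum>\<^sub>\<infinity>n::int. q ^ nat (n^2))"

definition rpsi :: "complex \<Rightarrow> complex" where
  "rpsi q = (\<Sum>n. q ^ (n * (n + 1) div 2))"

end

theory Submission
  imports Defs
begin

text \<open>
  Since \<open>a\<close> is odd, every solution of \<open>4n + ca = a T(x) + 3a T(y) + 4b T(z)\<close> has
  \<open>T(x) + 3T(y) \<equiv> c (mod 4)\<close>. The involution \<open>y \<mapsto> -1 - y\<close> fixes \<open>T(y)\<close> and flips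
  the parity of \<open>x - y\<close>, so the count is twice the number of solutions with \<open>x \<equiv> y (mod 2)\<close>.
  On such pairs the residue of \<open>T(x) + 3T(y)\<close> modulo 4 singles out one of four linear
  substitutions \<open>(u, v) \<mapsto> (x, y)\<close>, bijective onto that residue class, under which
  \<open>T(x) + 3T(y)\<close> becomes \<open>4W(u, v) + c\<close> with \<open>W\<close> one of \<open>6u\<^sup>2 + T(v)\<close>, \<open>2u\<^sup>2 + 3T(v)\<close>,
  \<open>T(u) + 12T(v)\<close>, \<open>3T(u) + 4T(v)\<close> (for \<open>c = 0, 1, 6, 3\<close>). This gives the two counting
  identities, and reduces the two generating functions to those of \<open>\<alpha>x\<^sup>2 + \<beta>T(y) + \<gamma>T(z)\<close>,
  which are products of absolutely convergent theta series; here the sum of \<open>q ^ T(y)\<close> over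
  all \<open>y \<in> \<int>\<close> is \<open>2\<psi>(q)\<close>, since \<open>T(-1 - y) = T(y)\<close>.
\<close>

lemma two_tri: "2 * tri x = x * (x + 1)"
  unfolding tri_def by simp

lemma tri_nonneg: "tri x \<ge> 0"
proof -
  have "x * (x + 1) \<ge> 0"
    by (cases "x \<ge> 0") (auto simp: mult_nonneg_nonneg mult_nonpos_nonpos)
  with two_tri[of x] show ?thesis by linarith
qed

lemma le_tri: "x \<le> tri x"
proof -
  have "0 \<le> (x - 1) * x" by (auto simp: zero_le_mult_iff)
  moreover have "2 * tri x = (x - 1) * x + 2 * x"
    unfolding two_tri by (simp add: algebra_simps)
  ultimately show ?thesis by linarith
qed

lemma tri_minus_one_minus: "tri (-1 - x) = tri x"
  using two_tri[of x] two_tri[of "-1 - x"] by (simp add: algebra_simps)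

lemma of_int_tri: "real_of_int (tri x) = of_int x * (of_int x + 1) / 2"
  using arg_cong[OF two_tri[of x], of real_of_int] by simp

lemma nat_tri_of_nat: "nat (tri (int n)) = n * (n + 1) div 2"
proof -
  have "tri (int n) = int (n * (n + 1)) div int 2" unfolding tri_def by (simp add: algebra_simps)
  then show ?thesis by (simp only: zdiv_int[symmetric] nat_int)
qed

lemma abs_le_square_int: "\<bar>x\<bar> \<le> (x :: int)\<^sup>2"
proof (cases "x = 0")
  case False
  then have "\<bar>x\<bar> * 1 \<le> \<bar>x\<bar> * \<bar>x\<bar>" by (intro mult_left_mono) auto
  then show ?thesis by (simp add: power2_eq_square abs_mult_self_eq)
qed simp

lemma finite_tri_le: "finite {x. tri x \<le> N}"
proof (rule finite_subset)
  show "{x. tri x \<le> N} \<subseteq> {-1 - N..N}"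
  proof
    fix x assume "x \<in> {x. tri x \<le> N}"
    moreover have "x \<le> tri x" and "-1 - x \<le> tri x"
      using le_tri[of x] le_tri[of "-1 - x"] by (simp_all add: tri_minus_one_minus)
    ultimately show "x \<in> {-1 - N..N}" by auto
  qed
qed simp

lemma finite_square_le: "finite {x :: int. x\<^sup>2 \<le> N}"
proof (rule finite_subset)
  show "{x :: int. x\<^sup>2 \<le> N} \<subseteq> {-N..N}"
  proof
    fix x :: int assume "x \<in> {x. x\<^sup>2 \<le> N}"
    with abs_le_square_int[of x] have "\<bar>x\<bar> \<le> N" by simp
    then show "x \<in> {-N..N}" by (simp add: abs_le_iff)
  qed
qed simp

lemma tri_form_substitutions:
  fixes u v :: int
  shows "tri (u + 6 * v) + 3 * tri (u - 2 * v) = 4 * (6 * v\<^sup>2 + tri u)"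
    and "tri (2 * u + 3 * v + 1) + 3 * tri (2 * u - v - 1) = 4 * (2 * u\<^sup>2 + 3 * tri v) + 1"
    and "tri (u + 6 * v + 3) + 3 * tri (u - 2 * v - 1) = 4 * (tri u + 12 * tri v) + 6"
    and "tri (3 * u + 2 * v + 2) + 3 * tri (2 * v - u) = 4 * (3 * tri u + 4 * tri v) + 3"
  by (simp_all add: of_int_tri power2_eq_square field_simps flip: of_int_eq_iff[where 'a=real])

lemma tri_form_cases:
  fixes x y :: int
  assumes "even (x - y)"
  obtains (res0) m u where "x = u + 6 * m" "y = u - 2 * m" "(tri x + 3 * tri y) mod 4 = 0"
    | (res1) m v where "x = 2 * m + 3 * v + 1" "y = 2 * m - v - 1" "(tri x + 3 * tri y) mod 4 = 1"
    | (res2) u v where "x = u + 6 * v + 3" "y = u - 2 * v - 1" "(tri x + 3 * tri y) mod 4 = 2"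
    | (res3) u v where "x = 3 * u + 2 * v + 2" "y = 2 * v - u" "(tri x + 3 * tri y) mod 4 = 3"
proof -
  have "(\<exists>m u. x = u + 6 * m \<and> y = u - 2 * m) \<or>
        (\<exists>m v. x = 2 * m + 3 * v + 1 \<and> y = 2 * m - v - 1) \<or>
        (\<exists>u v. x = u + 6 * v + 3 \<and> y = u - 2 * v - 1) \<or>
        (\<exists>u v. x = 3 * u + 2 * v + 2 \<and> y = 2 * v - u)"
    \<comment> \<open>the four images are \<open>x - y \<equiv> 0\<close> resp. \<open>4 (mod 8)\<close>, and, when \<open>x - y \<equiv> 2 (mod 4)\<close>,
      \<open>x + 3y \<equiv> 6\<close> resp. \<open>2 (mod 8)\<close>\<close>
    using assms by presburger
  then show ?thesis
  proof (elim disjE exE conjE)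
    fix m u assume xy: "x = u + 6 * m" "y = u - 2 * m"
    have "(tri x + 3 * tri y) mod 4 = 0" unfolding xy tri_form_substitutions by presburger
    with xy show ?thesis by (rule res0)
  next
    fix m v assume xy: "x = 2 * m + 3 * v + 1" "y = 2 * m - v - 1"
    have "(tri x + 3 * tri y) mod 4 = 1" unfolding xy tri_form_substitutions by presburger
    with xy show ?thesis by (rule res1)
  next
    fix u v assume xy: "x = u + 6 * v + 3" "y = u - 2 * v - 1"
    have "(tri x + 3 * tri y) mod 4 = 2" unfolding xy tri_form_substitutions by presburger
    with xy show ?thesis by (rule res2)
  next
    fix u v assume xy: "x = 3 * u + 2 * v + 2" "y = 2 * v - u"
    have "(tri x + 3 * tri y) mod 4 = 3" unfolding xy tri_form_substitutions by presburger
    with xy show ?thesis by (rule res3)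
  qed
qed

lemma card_halved_by_involution:
  assumes maps: "\<And>p. p \<in> S \<Longrightarrow> f p \<in> S" and invol: "\<And>p. f (f p) = p"
    and swap: "\<And>p. Q (f p) \<longleftrightarrow> \<not> Q p"
  shows "card S = 2 * card {p \<in> S. Q p}"
proof -
  let ?A = "{p \<in> S. Q p}" and ?B = "{p \<in> S. \<not> Q p}"
  have "inj f" by (metis invol injI)
  have "f ` ?A = ?B"
    using maps invol swap by (auto intro!: image_eqI[where x = "f _"])
  then have same_card: "card ?B = card ?A"
    using \<open>inj f\<close> by (metis card_image inj_on_subset subset_UNIV)
  have split: "S = ?A \<union> ?B" "?A \<inter> ?B = {}" by auto
  show ?thesis
  proof (cases "finite ?A")
    case True
    with \<open>f ` ?A = ?B\<close> have "finite ?B" by (metis finite_imageI)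
    have "card (?A \<union> ?B) = card ?A + card ?B"
      by (rule card_Un_disjoint[OF True \<open>finite ?B\<close> split(2)])
    with split(1) same_card show ?thesis by simp
  next
    case False
    with split have "infinite S" by (metis finite_Un)
    with False show ?thesis by simp
  qed
qed

lemma tcount_by_substitution:
  fixes a b c n :: nat and X Y W :: "int \<Rightarrow> int \<Rightarrow> int"
  assumes "odd a"
    and form: "\<And>u v. tri (X u v) + 3 * tri (Y u v) = 4 * W u v + int c"
    and parity: "\<And>u v. even (X u v - Y u v)"
    and inj: "inj (\<lambda>(u, v). (X u v, Y u v))"
    and onto: "\<And>x y. even (x - y) \<Longrightarrow> (tri x + 3 * tri y) mod 4 = int c mod 4 \<Longrightarrow>
                 \<exists>u v. x = X u v \<and> y = Y u v"
  shows "tcount a (3 * a) (4 * b) (4 * n + c * a) =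
           2 * card {(u, v, z). int n = int a * W u v + int b * tri z}"
proof -
  define S where "S = {(x, y, z).
    int (4 * n + c * a) = int a * tri x + int (3 * a) * tri y + int (4 * b) * tri z}"
  define T where "T = {(u, v, z). int n = int a * W u v + int b * tri z}"
  define subst where "subst = (\<lambda>(u, v, z :: int). (X u v, Y u v, z))"
  have in_S:
    "(x, y, z) \<in> S \<longleftrightarrow> int a * (tri x + 3 * tri y - int c) = 4 * (int n - int b * tri z)"
    for x y z by (auto simp: S_def algebra_simps)
  have "card S = 2 * card {p \<in> S. even (fst p - fst (snd p))}"
  proof (rule card_halved_by_involution)
    show "(\<lambda>(x, y, z). (x, -1 - y, z)) p \<in> S" if "p \<in> S" for p
      using that by (cases p) (auto simp: in_S tri_minus_one_minus)
    show "even (fst ((\<lambda>(x, y, z). (x, -1 - y, z)) p) - fst (snd ((\<lambda>(x, y, z). (x, -1 - y, z)) p)))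
            \<longleftrightarrow> \<not> even (fst p - fst (snd p))" for p :: "int \<times> int \<times> int"
      by (cases p) (simp; presburger)
  qed auto
  also have "{p \<in> S. even (fst p - fst (snd p))} = subst ` T"
  proof (intro equalityI subsetI)
    fix p assume "p \<in> {p \<in> S. even (fst p - fst (snd p))}"
    then obtain x y z where p: "p = (x, y, z)" and "(x, y, z) \<in> S" and "even (x - y)"
      by (cases p) auto
    then have "4 dvd int a * (tri x + 3 * tri y - int c)" by (simp add: in_S)
    moreover have "coprime 4 (int a)"
      using \<open>odd a\<close> coprime_power_left_iff[of 2 2 "int a"] by simp
    ultimately have "(tri x + 3 * tri y) mod 4 = int c mod 4"
      by (simp add: coprime_dvd_mult_right_iff mod_eq_dvd_iff)
    with \<open>even (x - y)\<close> obtain u v where xy: "x = X u v" "y = Y u v" using onto by blast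
    have "(u, v, z) \<in> T" using \<open>(x, y, z) \<in> S\<close> unfolding T_def in_S xy form by simp
    then show "p \<in> subst ` T" unfolding p xy subst_def by force
  next
    fix p assume "p \<in> subst ` T"
    then obtain u v z where p: "p = (X u v, Y u v, z)" and "(u, v, z) \<in> T"
      unfolding subst_def by auto
    then have "(X u v, Y u v, z) \<in> S"
      unfolding T_def by (simp add: in_S form algebra_simps)
    with parity show "p \<in> {p \<in> S. even (fst p - fst (snd p))}"
      by (simp add: p)
  qed
  also have "card (subst ` T) = card T"
    using inj by (intro card_image) (auto simp: subst_def inj_on_def)
  finally show ?thesis unfolding tcount_def S_def T_def .
qed

lemma tcount_4n_plus_6a:
  assumes "odd a"
  shows "tcount a (3 * a) (4 * b) (4 * n + 6 * a) = 2 * tcount a (12 * a) b n"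
proof -
  have "tcount a (3 * a) (4 * b) (4 * n + 6 * a) =
          2 * card {(u, v, z). int n = int a * (tri u + 12 * tri v) + int b * tri z}"
    by (rule tcount_by_substitution[OF assms, where X = "\<lambda>u v. u + 6 * v + 3" and Y = "\<lambda>u v. u - 2 * v - 1"];
        (elim tri_form_cases)?; auto simp: tri_form_substitutions inj_def)
  also have "{(u, v, z). int n = int a * (tri u + 12 * tri v) + int b * tri z} =
               {(x, y, z). int n = int a * tri x + int (12 * a) * tri y + int b * tri z}"
    by (auto simp: algebra_simps)
  finally show ?thesis unfolding tcount_def .
qed

lemma tcount_4n_plus_3a:
  assumes "odd a"
  shows "tcount a (3 * a) (4 * b) (4 * n + 3 * a) = 2 * tcount (3 * a) (4 * a) b n"
proof -
  have "tcount a (3 * a) (4 * b) (4 * n + 3 * a) =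
          2 * card {(u, v, z). int n = int a * (3 * tri u + 4 * tri v) + int b * tri z}"
    by (rule tcount_by_substitution[OF assms, where X = "\<lambda>u v. 3 * u + 2 * v + 2" and Y = "\<lambda>u v. 2 * v - u"];
        (elim tri_form_cases)?; auto simp: tri_form_substitutions inj_def)
  also have "{(u, v, z). int n = int a * (3 * tri u + 4 * tri v) + int b * tri z} =
               {(x, y, z). int n = int (3 * a) * tri x + int (4 * a) * tri y + int b * tri z}"
    by (auto simp: algebra_simps)
  finally show ?thesis unfolding tcount_def .
qed

definition sqtri_count :: "nat \<Rightarrow> nat \<Rightarrow> nat \<Rightarrow> nat \<Rightarrow> nat" where
  "sqtri_count a b c n = card {(x :: int, y :: int, z :: int).
      int n = int a * x\<^sup>2 + int b * tri y + int c * tri z}"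

lemma tcount_4n:
  assumes "odd a"
  shows "tcount a (3 * a) (4 * b) (4 * n) = 2 * sqtri_count (6 * a) a b n"
proof -
  have "tcount a (3 * a) (4 * b) (4 * n + 0 * a) =
          2 * card {(m, u, z). int n = int a * (6 * m\<^sup>2 + tri u) + int b * tri z}"
    by (rule tcount_by_substitution[OF assms, where X = "\<lambda>m u. u + 6 * m" and Y = "\<lambda>m u. u - 2 * m"];
        (elim tri_form_cases)?; auto simp: tri_form_substitutions inj_def)
  also have "{(m, u, z). int n = int a * (6 * m\<^sup>2 + tri u) + int b * tri z} =
               {(x, y, z). int n = int (6 * a) * x\<^sup>2 + int a * tri y + int b * tri z}"
    by (auto simp: algebra_simps)
  finally show ?thesis unfolding sqtri_count_def by simp
qed

lemma tcount_4n_plus_a: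
  assumes "odd a"
  shows "tcount a (3 * a) (4 * b) (4 * n + a) = 2 * sqtri_count (2 * a) (3 * a) b n"
proof -
  have "tcount a (3 * a) (4 * b) (4 * n + 1 * a) =
          2 * card {(m, v, z). int n = int a * (2 * m\<^sup>2 + 3 * tri v) + int b * tri z}"
    by (rule tcount_by_substitution[OF assms, where X = "\<lambda>m v. 2 * m + 3 * v + 1" and Y = "\<lambda>m v. 2 * m - v - 1"];
        (elim tri_form_cases)?; auto simp: tri_form_substitutions inj_def)
  also have "{(m, v, z). int n = int a * (2 * m\<^sup>2 + 3 * tri v) + int b * tri z} =
               {(x, y, z). int n = int (2 * a) * x\<^sup>2 + int (3 * a) * tri y + int b * tri z}"
    by (auto simp: algebra_simps)
  finally show ?thesis unfolding sqtri_count_def by simp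
qed

lemma has_sum_power_superlinear:
  fixes w :: complex and g :: "nat \<Rightarrow> nat"
  assumes "norm w < 1" and "\<And>n. n \<le> g n"
  shows "((\<lambda>n. w ^ g n) has_sum (\<Sum>n. w ^ g n)) UNIV"
proof -
  have norm_summable: "summable (\<lambda>n. norm (w ^ g n))"
  proof (rule summable_comparison_test')
    show "summable (\<lambda>n. norm w ^ n)" using assms(1) by simp
    show "norm (norm (w ^ g n)) \<le> norm w ^ n" for n
      using power_decreasing[OF assms(2)[of n], of "norm w"] assms(1) by (simp add: norm_power)
  qed
  show ?thesis
    using norm_summable_imp_has_sum[OF norm_summable
            summable_sums[OF summable_norm_cancel[OF norm_summable]]] .
qed

lemma has_sum_int_split:
  fixes f :: "int \<Rightarrow> 'a :: topological_comm_monoid_add"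
  assumes "((\<lambda>n. f (int n)) has_sum A) UNIV" and "((\<lambda>n. f (-1 - int n)) has_sum B) UNIV"
  shows "(f has_sum (A + B)) UNIV"
proof -
  have "(f has_sum A) (range int)" and "(f has_sum B) (range (\<lambda>n. -1 - int n))"
    using assms by (simp_all add: has_sum_reindex inj_on_def comp_def)
  moreover have "range int \<inter> range (\<lambda>n. -1 - int n) = {}" by auto
  moreover have "range int \<union> range (\<lambda>n. -1 - int n) = UNIV"
  proof -
    have "x \<in> range int \<or> x \<in> range (\<lambda>n. -1 - int n)" for x :: int
      by (cases "x \<ge> 0") (auto intro: image_eqI[of _ _ "nat x"] image_eqI[of _ _ "nat (-1 - x)"])
    then show ?thesis by blast
  qed
  ultimately show ?thesis by (metis has_sum_Un_disjoint)
qed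

lemma has_sum_rpsi:
  assumes "norm w < 1"
  shows "((\<lambda>x :: int. w ^ nat (tri x)) has_sum 2 * rpsi w) UNIV"
proof -
  have "n \<le> n * (n + 1) div 2" for n :: nat
    by (metis le_tri nat_int nat_mono nat_tri_of_nat)
  then have "((\<lambda>n. w ^ (n * (n + 1) div 2)) has_sum rpsi w) UNIV"
    unfolding rpsi_def by (rule has_sum_power_superlinear[OF assms])
  then have nonneg_part: "((\<lambda>n. w ^ nat (tri (int n))) has_sum rpsi w) UNIV"
    by (simp only: nat_tri_of_nat)
  then have neg_part: "((\<lambda>n. w ^ nat (tri (-1 - int n))) has_sum rpsi w) UNIV"
    by (simp only: tri_minus_one_minus)
  show ?thesis
    unfolding mult_2 by (rule has_sum_int_split[OF nonneg_part neg_part])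
qed

lemma has_sum_rphi:
  assumes "norm w < 1"
  shows "((\<lambda>x :: int. w ^ nat (x\<^sup>2)) has_sum rphi w) UNIV"
proof -
  have nonneg_part: "nat ((int n)\<^sup>2) = n\<^sup>2" for n
    by (metis nat_int of_nat_power)
  have neg_part: "nat ((-1 - int n)\<^sup>2) = (n + 1)\<^sup>2" for n
  proof -
    have "(-1 - int n)\<^sup>2 = int ((n + 1)\<^sup>2)" by (simp add: power2_eq_square algebra_simps)
    then show ?thesis by (simp only: nat_int)
  qed
  have "((\<lambda>n. w ^ nat ((int n)\<^sup>2)) has_sum (\<Sum>n. w ^ n\<^sup>2)) UNIV"
    unfolding nonneg_part
    by (rule has_sum_power_superlinear[OF assms]) (simp add: power2_eq_square le_square)
  moreover have "((\<lambda>n. w ^ nat ((-1 - int n)\<^sup>2)) has_sum (\<Sum>n. w ^ (n + 1)\<^sup>2)) UNIV"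
    unfolding neg_part
    by (rule has_sum_power_superlinear[OF assms])
      (unfold power2_eq_square, rule order_trans[OF le_add1 le_square])
  ultimately have "((\<lambda>x :: int. w ^ nat (x\<^sup>2)) has_sum
                      (\<Sum>n. w ^ n\<^sup>2) + (\<Sum>n. w ^ (n + 1)\<^sup>2)) UNIV"
    by (rule has_sum_int_split)
  then have "(\<lambda>x :: int. w ^ nat (x\<^sup>2)) summable_on UNIV"
    by (rule has_sum_imp_summable)
  then show ?thesis unfolding rphi_def by (rule has_sum_infsum)
qed

lemma has_sum_product:
  fixes f :: "'a \<Rightarrow> complex" and g :: "'b \<Rightarrow> complex"
  assumes f: "(f has_sum F) A" and g: "(g has_sum G) B"
  shows "((\<lambda>(x, y). f x * g y) has_sum F * G) (A \<times> B)"
proof (rule has_sum_SigmaI)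
  show "((\<lambda>y. (\<lambda>(x, y). f x * g y) (x, y)) has_sum f x * G) B" for x
    using has_sum_cmult_right[OF g] by simp
  show "((\<lambda>x. f x * G) has_sum F * G) A"
    using has_sum_cmult_left[OF f] .
  have "(\<lambda>x. norm (f x)) summable_on A" and "(\<lambda>y. norm (g y)) summable_on B"
    using f g summable_on_iff_abs_summable_on_complex has_sum_imp_summable by blast+
  then have "(\<lambda>p. norm (case p of (x, y) \<Rightarrow> f x * g y)) summable_on A \<times> B"
    by (intro summable_on_SigmaI[where g = "\<lambda>x. norm (f x) * (\<Sum>\<^sub>\<infinity>y\<in>B. norm (g y))"])
       (auto simp: norm_mult intro: has_sum_cmult_right has_sum_infsum summable_on_cmult_left)
  then show "(\<lambda>(x, y). f x * g y) summable_on A \<times> B"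
    by (rule abs_summable_summable)
qed

lemma sums_card_fibers:
  fixes F :: "'a \<Rightarrow> nat" and q :: complex
  assumes "((\<lambda>i. q ^ F i) has_sum S) UNIV" and "\<And>n. finite {i. F i = n}"
  shows "(\<lambda>n. of_nat (card {i. F i = n}) * q ^ n) sums S"
proof -
  have "bij_betw (\<lambda>i. (F i, i)) UNIV (SIGMA n:UNIV. {i. F i = n})"
    by (auto simp: bij_betw_def inj_on_def)
  from has_sum_reindex_bij_betw[OF this, of "\<lambda>(n, i). q ^ n" S] assms(1)
  have "((\<lambda>(n, i). q ^ n) has_sum S) (SIGMA n:UNIV. {i. F i = n})" by simp
  then have "((\<lambda>n. of_nat (card {i. F i = n}) * q ^ n) has_sum S) UNIV"
    by (rule has_sum_SigmaD) (use assms(2) in \<open>auto intro!: has_sum_finiteI\<close>)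
  then show ?thesis by (rule has_sum_imp_sums)
qed

lemma sqtri_count_sums:
  fixes q :: complex
  assumes q: "norm q < 1" and pos: "\<alpha> > 0" "\<beta> > 0" "\<gamma> > 0"
  shows "(\<lambda>n. of_nat (sqtri_count \<alpha> \<beta> \<gamma> n) * q ^ n) sums
           (4 * rphi (q ^ \<alpha>) * rpsi (q ^ \<beta>) * rpsi (q ^ \<gamma>))"
proof -
  have small: "norm (q ^ k) < 1" if "k > 0" for k
    using q that by (simp add: norm_power power_less_one_iff)
  define F where
    "F = (\<lambda>(x :: int, y :: int, z :: int). \<alpha> * nat (x\<^sup>2) + \<beta> * nat (tri y) + \<gamma> * nat (tri z))"
  have "((\<lambda>i. q ^ F i) has_sum rphi (q ^ \<alpha>) * (2 * rpsi (q ^ \<beta>) * (2 * rpsi (q ^ \<gamma>))))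
          (UNIV \<times> UNIV \<times> UNIV)"
    using has_sum_product[OF has_sum_rphi[OF small[OF pos(1)]]
            has_sum_product[OF has_sum_rpsi[OF small[OF pos(2)]] has_sum_rpsi[OF small[OF pos(3)]]]]
    by (simp add: F_def case_prod_unfold power_add power_mult mult.assoc)
  then have has_sum_F:
    "((\<lambda>i. q ^ F i) has_sum 4 * rphi (q ^ \<alpha>) * rpsi (q ^ \<beta>) * rpsi (q ^ \<gamma>)) UNIV"
    by (simp add: mult_ac)
  have fibre:
    "{i. F i = n} = {(x, y, z). int n = int \<alpha> * x\<^sup>2 + int \<beta> * tri y + int \<gamma> * tri z}" for n
  proof -
    have "int (F (x, y, z)) = int \<alpha> * x\<^sup>2 + int \<beta> * tri y + int \<gamma> * tri z" for x y z
      using tri_nonneg[of y] tri_nonneg[of z] by (simp add: F_def)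
    then have "F (x, y, z) = n \<longleftrightarrow> int n = int \<alpha> * x\<^sup>2 + int \<beta> * tri y + int \<gamma> * tri z" for x y z
      by (metis of_nat_eq_iff)
    then show ?thesis by auto
  qed
  have finite_fibre: "finite {i. F i = n}" for n
  proof (rule finite_subset)
    show "{i. F i = n} \<subseteq> {x. x\<^sup>2 \<le> int n} \<times> {y. tri y \<le> int n} \<times> {z. tri z \<le> int n}"
    proof
      fix i assume "i \<in> {i. F i = n}"
      moreover obtain x y z where i: "i = (x, y, z)" by (cases i)
      ultimately have rep: "int n = int \<alpha> * x\<^sup>2 + int \<beta> * tri y + int \<gamma> * tri z"
        unfolding fibre by simp
      have "x\<^sup>2 \<le> int \<alpha> * x\<^sup>2" "tri y \<le> int \<beta> * tri y" "tri z \<le> int \<gamma> * tri z"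
        using pos tri_nonneg[of y] tri_nonneg[of z] mult_right_mono[of 1 _ "x\<^sup>2"]
          mult_right_mono[of 1 _ "tri y"] mult_right_mono[of 1 _ "tri z"] by simp_all
      with rep tri_nonneg[of y] tri_nonneg[of z] zero_le_power2[of x]
      have "x\<^sup>2 \<le> int n" "tri y \<le> int n" "tri z \<le> int n" by linarith+
      then show "i \<in> {x. x\<^sup>2 \<le> int n} \<times> {y. tri y \<le> int n} \<times> {z. tri z \<le> int n}"
        unfolding i by simp
    qed
  qed (intro finite_cartesian_product finite_square_le finite_tri_le)
  show ?thesis
    using sums_card_fibers[OF has_sum_F finite_fibre] unfolding sqtri_count_def fibre .
qed

theorem lemma4p1:
  fixes a b :: nat
  assumes "a > 0" and "b > 0" and "odd a"
  shows "(\<forall>n::nat. n > 0 \<longrightarrow>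
            tcount a (3*a) (4*b) (4*n + 6*a) = 2 * tcount a (12*a) b n \<and>
            tcount a (3*a) (4*b) (4*n + 3*a) = 2 * tcount (3*a) (4*a) b n) \<and>
         (\<forall>q::complex. norm q < 1 \<longrightarrow>
            (\<lambda>n. of_nat (tcount a (3*a) (4*b) (4*n)) * q ^ n) sums
               (8 * rphi (q ^ (6*a)) * rpsi (q ^ a) * rpsi (q ^ b)) \<and>
            (\<lambda>n. of_nat (tcount a (3*a) (4*b) (4*n + a)) * q ^ n) sums
               (8 * rphi (q ^ (2*a)) * rpsi (q ^ (3*a)) * rpsi (q ^ b)))"
proof (intro conjI allI impI)
  fix n :: nat
  show "tcount a (3*a) (4*b) (4*n + 6*a) = 2 * tcount a (12*a) b n"
    using tcount_4n_plus_6a[OF \<open>odd a\<close>] .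
  show "tcount a (3*a) (4*b) (4*n + 3*a) = 2 * tcount (3*a) (4*a) b n"
    using tcount_4n_plus_3a[OF \<open>odd a\<close>] .
next
  fix q :: complex
  assume q: "norm q < 1"
  show "(\<lambda>n. of_nat (tcount a (3*a) (4*b) (4*n)) * q ^ n) sums
          (8 * rphi (q ^ (6*a)) * rpsi (q ^ a) * rpsi (q ^ b))"
    unfolding tcount_4n[OF \<open>odd a\<close>]
    using sums_mult[OF sqtri_count_sums[OF q, where \<alpha> = "6 * a" and \<beta> = a and \<gamma> = b], of 2] assms
    by (simp add: mult_ac)
  show "(\<lambda>n. of_nat (tcount a (3*a) (4*b) (4*n + a)) * q ^ n) sums
          (8 * rphi (q ^ (2*a)) * rpsi (q ^ (3*a)) * rpsi (q ^ b))"
    unfolding tcount_4n_plus_a[OF \<open>odd a\<close>]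
    using sums_mult[OF sqtri_count_sums[OF q, where \<alpha> = "2 * a" and \<beta> = "3 * a" and \<gamma> = b], of 2]
      assms by (simp add: mult_ac)
qed

end
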